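(* Consider the redundancy system with $N$ parallel servers and $d\le N$ replicas per job described in the context. Let $\boldsymbol{\omega}=(\omega_1,\dots,\omega_N)$ be a workload state and let $\omega_{(1)}\ge\omega_{(2)}\ge\dots\ge\omega_{(N)}$ denote its ordered values. If $\omega_{(1)}=\omega_{(2)}=\dots=\omega_{(d)}$, then every future workload state $\boldsymbol{\omega}_{\mathrm{new}}$ also satisfies $\omega_{\mathrm{new},(1)}=\dots=\omega_{\mathrm{new},(d)}$. That is, once the $d$ largest workloads are equal, they remain equal forever.
   Context: System: $N$ parallel servers; jobs arrive according to a Poisson process of rate $\lambda$. Each arriving job is replicated into $d$ replicas ($1\le d\le N$), which are sent to $d$ distinct servers chosen uniformly at random without replacement. Replicas are served first-come-first-served at each server; a job is completed as soon as the first of its replicas completes service, at which moment the other $d-1$ replicas are instantaneously abandoned (cancel-on-completion). The service requirements of the $d$ replicas are i.i.d. copies of a nonnegative random variable $B$ (independent across jobs). The workload $\omega_i$ of server $i$ is the real amount of work server $i$ must perform to become idle in the absence of further arrivals; between arrivals each positive workload decreases at unit rate. If a job arrives with sampled servers $s_1,\dots,s_d$ and realized replica requirements $b_1,\dots,b_d$, then the new workload at server $s_l$ is $\max\{\min_{j\in\{1,\dots,d\}}(\omega_{s_j}+b_j),\ \omega_{s_l}\}$ for $l=1,\dots,d$, and the workloads of the other servers are unchanged. *)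

theory Defs
  imports Main Complex_Main
begin

text \<open>Servers are indexed by 0..N-1; a workload state is a function nat => real
  (only the values at i < N matter).\<close>

definition ordv :: "nat \<Rightarrow> (nat \<Rightarrow> real) \<Rightarrow> nat \<Rightarrow> real" where
  "ordv N w k = rev (sort (map w [0..<N])) ! (k - 1)"

definition drain :: "real \<Rightarrow> (nat \<Rightarrow> real) \<Rightarrow> (nat \<Rightarrow> real)" where
  "drain t w = (\<lambda>i. if w i > 0 then max (w i - t) 0 else w i)"

text \<open>Arrival of a job with sampled server set S and replica requirements b j (j in S).\<close>
definition arrive :: "nat set \<Rightarrow> (nat \<Rightarrow> real) \<Rightarrow> (nat \<Rightarrow> real) \<Rightarrow> (nat \<Rightarrow> real)" where
  "arrive S b w = (\<lambda>i. if i \<in> S then max (Min ((\<lambda>j. w j + b j) ` S)) (w i) else w i)"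

inductive reach :: "nat \<Rightarrow> nat \<Rightarrow> (nat \<Rightarrow> real) \<Rightarrow> (nat \<Rightarrow> real) \<Rightarrow> bool"
  for N d :: nat and w :: "nat \<Rightarrow> real" where
  refl: "reach N d w w"
| drain_step: "reach N d w w' \<Longrightarrow> t \<ge> 0 \<Longrightarrow> reach N d w (drain t w')"
| arrive_step: "reach N d w w' \<Longrightarrow> S \<subseteq> {0..<N} \<Longrightarrow> card S = d \<Longrightarrow>
     (\<forall>j\<in>S. b j \<ge> 0) \<Longrightarrow> reach N d w (arrive S b w')"

end

theory Submission
  imports Defs "HOL-Library.Multiset"
begin

text \<open>The \<open>d\<close> largest workloads coincide exactly when at least \<open>d\<close> servers attain the
  maximal workload. Draining acts on every workload by the same nondecreasing map, so servers
  of maximal workload keep it. An arrival with sampled set \<open>S\<close> and \<open>m = min (\<omega>\<^sub>s + b\<^sub>s)\<close>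
  either has \<open>m\<close> below every maximal workload, and then the maximal servers stay maximal, or
  lies above all workloads, and then the \<open>d\<close> servers of \<open>S\<close> all end up at the new maximum \<open>m\<close>.\<close>

definition max_servers :: "nat \<Rightarrow> (nat \<Rightarrow> real) \<Rightarrow> nat set" where
  "max_servers N w = {i. i < N \<and> (\<forall>j<N. w j \<le> w i)}"

lemma le_ordv_iff_card:
  assumes "1 \<le> k" "k \<le> N"
  shows "v \<le> ordv N w k \<longleftrightarrow> k \<le> card {i. i < N \<and> v \<le> w i}"
proof -
  define xs where "xs = map w [0..<N]"
  define L where "L = rev (sort xs)"
  have len: "length L = N"
    by (simp add: L_def xs_def)
  have desc: "L ! q \<le> L ! p" if "p \<le> q" "q < N" for p q
  proof -
    have "rev L ! (N - 1 - q) \<le> rev L ! (N - 1 - p)"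
      using that len by (intro sorted_nth_mono) (auto simp: L_def)
    then show ?thesis
      using that len by (simp add: rev_nth)
  qed
  define above where "above = {p. p < N \<and> v \<le> L ! p}"
  have card_above: "card above = card {i. i < N \<and> v \<le> w i}"
  proof -
    have "card above = length (filter ((\<le>) v) L)"
      by (simp add: above_def length_filter_conv_card len)
    also have "\<dots> = length (filter ((\<le>) v) xs)"
      by (metis L_def mset_filter mset_rev mset_sort size_mset)
    also have "\<dots> = card {i. i < N \<and> v \<le> xs ! i}"
      by (simp add: length_filter_conv_card xs_def)
    also have "{i. i < N \<and> v \<le> xs ! i} = {i. i < N \<and> v \<le> w i}"
      by (auto simp: xs_def)
    finally show ?thesis .
  qed
  have "v \<le> L ! (k - 1) \<longleftrightarrow> k \<le> card above"
  proof
    assume top_k: "v \<le> L ! (k - 1)"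
    have "{0..<k} \<subseteq> above"
    proof
      fix p assume "p \<in> {0..<k}"
      then have "p \<le> k - 1" "k - 1 < N"
        using assms by auto
      then show "p \<in> above"
        using desc[of p "k - 1"] top_k by (auto simp: above_def)
    qed
    then show "k \<le> card above"
      using card_mono[of above "{0..<k}"] by (simp add: above_def)
  next
    assume k_le: "k \<le> card above"
    show "v \<le> L ! (k - 1)"
    proof (rule ccontr)
      assume below_k: "\<not> v \<le> L ! (k - 1)"
      have "above \<subseteq> {0..<k - 1}"
      proof
        fix p assume "p \<in> above"
        then have "p < N" "v \<le> L ! p"
          by (auto simp: above_def)
        then show "p \<in> {0..<k - 1}"
          using desc[of "k - 1" p] below_k by (cases "k - 1 \<le> p") auto
      qed
      then have "card above \<le> k - 1"
        using card_mono[of "{0..<k - 1}" above] by simp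
      then show False
        using k_le assms by linarith
    qed
  qed
  then show ?thesis
    by (simp add: ordv_def L_def xs_def card_above)
qed

lemma ordv_antimono:
  assumes "1 \<le> k" "k \<le> l" "l \<le> N"
  shows "ordv N w l \<le> ordv N w k"
  using le_ordv_iff_card[of l N "ordv N w l" w] le_ordv_iff_card[of k N "ordv N w l" w] assms
  by simp

lemma max_servers_eq_ordv_1:
  assumes "1 \<le> N"
  shows "max_servers N w = {i. i < N \<and> ordv N w 1 \<le> w i}"
proof -
  have le_ordv_1_iff: "v \<le> ordv N w 1 \<longleftrightarrow> (\<exists>i<N. v \<le> w i)" for v
    using le_ordv_iff_card[of 1 N v w] assms by (auto simp: Suc_le_eq card_gt_0_iff)
  have below: "w j \<le> ordv N w 1" if "j < N" for j
    using le_ordv_1_iff that by blast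
  obtain i0 where "i0 < N" "ordv N w 1 \<le> w i0"
    using le_ordv_1_iff[of "ordv N w 1"] by blast
  then show ?thesis
    unfolding max_servers_def using below by (blast intro: order_trans)
qed

lemma top_ordv_tied_iff_card_max_servers:
  assumes "1 \<le> d" "d \<le> N"
  shows "(\<forall>k\<in>{1..d}. ordv N w k = ordv N w 1) \<longleftrightarrow> d \<le> card (max_servers N w)"
proof -
  have "(\<forall>k\<in>{1..d}. ordv N w k = ordv N w 1) \<longleftrightarrow> ordv N w 1 \<le> ordv N w d"
  proof
    assume top_d: "ordv N w 1 \<le> ordv N w d"
    show "\<forall>k\<in>{1..d}. ordv N w k = ordv N w 1"
    proof
      fix k assume "k \<in> {1..d}"
      then have "ordv N w k \<le> ordv N w 1" "ordv N w d \<le> ordv N w k"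
        using ordv_antimono[of _ _ N w] assms by auto
      then show "ordv N w k = ordv N w 1"
        using top_d by linarith
    qed
  next
    assume "\<forall>k\<in>{1..d}. ordv N w k = ordv N w 1"
    then show "ordv N w 1 \<le> ordv N w d"
      using assms by (metis atLeastAtMost_iff order_refl)
  qed
  also have "\<dots> \<longleftrightarrow> d \<le> card (max_servers N w)"
    using le_ordv_iff_card[OF assms] assms by (simp add: max_servers_eq_ordv_1)
  finally show ?thesis .
qed

lemma finite_max_servers: "finite (max_servers N w)"
  by (simp add: max_servers_def)

lemma max_servers_drain:
  assumes "t \<ge> 0"
  shows "max_servers N w \<subseteq> max_servers N (drain t w)"
  using assms by (auto simp: max_servers_def drain_def)

lemma max_servers_arrive:
  assumes "S \<subseteq> {0..<N}"
  shows "max_servers N w \<subseteq> max_servers N (arrive S b w) \<or> S \<subseteq> max_servers N (arrive S b w)"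
proof -
  define m where "m = Min ((\<lambda>j. w j + b j) ` S)"
  have arrive: "arrive S b w = (\<lambda>i. if i \<in> S then max m (w i) else w i)"
    unfolding arrive_def m_def by simp
  show ?thesis
  proof (cases "\<forall>i\<in>max_servers N w. m \<le> w i")
    case True
    then have "max_servers N w \<subseteq> max_servers N (arrive S b w)"
      by (auto simp: max_servers_def arrive)
    then show ?thesis ..
  next
    case False
    then have "\<forall>j<N. w j < m"
      by (force simp: max_servers_def)
    then have "S \<subseteq> max_servers N (arrive S b w)"
      using assms by (auto simp: max_servers_def arrive)
    then show ?thesis ..
  qed
qed

lemma reach_card_max_servers:
  assumes "reach N d w w'" "d \<le> card (max_servers N w)"
  shows "d \<le> card (max_servers N w')"
  using assms
proof (induction rule: reach.induct)
  case refl
  then show ?case .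
next
  case (drain_step w' t)
  then show ?case
    using card_mono[OF finite_max_servers max_servers_drain] by (meson le_trans)
next
  case (arrive_step w' S b)
  then show ?case
    using max_servers_arrive[of S N w' b] card_mono[OF finite_max_servers] by (meson le_trans)
qed

theorem mainTheorem1:
  fixes N d :: nat and w w' :: "nat \<Rightarrow> real"
  assumes "1 \<le> d" and "d \<le> N"
    and "\<forall>i<N. 0 \<le> w i"
    and "\<forall>k\<in>{1..d}. ordv N w k = ordv N w 1"
    and "reach N d w w'"
  shows "\<forall>k\<in>{1..d}. ordv N w' k = ordv N w' 1"
  using assms(4) reach_card_max_servers[OF assms(5)]
  unfolding top_ordv_tied_iff_card_max_servers[OF assms(1,2)] by simp

end
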